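(* Let $\mathcal{M}=(\mathbf A,\perp,\{\mathsf{t},\mathsf{f}\})$ be an $\mathfrak{N}_w$-model and let $x,y$ be distinct propositional variables. Then $h((x\Rightarrow y)\Rightarrow(y\Rightarrow x))\perp\mathsf{f}$ for every homomorphism $h$ from the formula algebra into $\mathbf A$ if and only if $\mathbf A$ is trivial (has exactly one element).
   Context: Formulas are built from variables using binary $\otimes,\circ$ and unary ${}^{*}$; in formulas and algebras, $\varphi\Rightarrow\psi:=(\varphi\circ\psi^{*})^{*}$, $\varphi\Leftrightarrow\psi:=(\varphi\Rightarrow\psi)\otimes(\psi\Rightarrow\varphi)$, $\varphi\not\Leftrightarrow\psi:=(\varphi\Leftrightarrow\psi)^{*}$, $\varphi\not\Leftrightarrow\psi\not\Leftrightarrow\chi:=((\varphi\not\Leftrightarrow\psi)\otimes(\varphi\not\Leftrightarrow\chi))\otimes(\psi\not\Leftrightarrow\chi)$. A weak $\mathcal{N}$-algebra is an algebra $(A,\otimes,\circ,{}^{*})$ of type $(2,2,1)$ with $\otimes,\circ$ commutative, $x^{**}=x$, and $(x\otimes y)\circ z=(x\otimes z)\circ y$. With $\mathsf{t}\ne\mathsf{f}$ symbols not in $A$, $\overline A=A\cup\{\mathsf{t},\mathsf{f}\}$, an $\mathfrak{N}_w$-model is $(\mathbf A,\perp,\{\mathsf{t},\mathsf{f}\})$, $\mathbf A$ a weak $\mathcal{N}$-algebra, $\perp\subseteq\overline A\times\overline A$, such that for all $x,y,z\in A$: (a) $x\perp x^{*}$; (b) $x\perp y^{*}$ and $y\perp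 x^{*}$ imply $x=y$; (c) $x\perp y$ iff $x\circ y\perp\mathsf{t}$; (d) $x\perp\mathsf{t}$ iff $x^{*}\perp\mathsf{f}$; (e) $x\perp\mathsf{f}$ and $y\perp\mathsf{f}$ iff $x\otimes y\perp\mathsf{f}$; (f) $(x\circ y^{*})^{*}\perp(x\circ y)^{*}$; (g) $x\perp y$ and $x\perp\mathsf{f}$ imply $y\perp\mathsf{t}$; (h) $(x\not\Leftrightarrow y\not\Leftrightarrow z)\perp((x\Rightarrow y)\Rightarrow((y\Rightarrow z)\Rightarrow(x\Rightarrow z)))^{*}$. *)

theory Defs
  imports Main
begin

datatype 'a ext = Elem 'a | T | F

datatype 'v form =
    Var 'v
  | FOtimes "'v form" "'v form"
  | FCirc "'v form" "'v form"
  | FStar "'v form"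

definition fimp :: "'v form \<Rightarrow> 'v form \<Rightarrow> 'v form" where
  "fimp p q = FStar (FCirc p (FStar q))"

definition aimp :: "('a \<Rightarrow> 'a \<Rightarrow> 'a) \<Rightarrow> ('a \<Rightarrow> 'a) \<Rightarrow> 'a \<Rightarrow> 'a \<Rightarrow> 'a" where
  "aimp cc st x y = st (cc x (st y))"

definition aiff :: "('a \<Rightarrow> 'a \<Rightarrow> 'a) \<Rightarrow> ('a \<Rightarrow> 'a \<Rightarrow> 'a) \<Rightarrow> ('a \<Rightarrow> 'a) \<Rightarrow> 'a \<Rightarrow> 'a \<Rightarrow> 'a" where
  "aiff ot cc st x y = ot (aimp cc st x y) (aimp cc st y x)"

definition aniff :: "('a \<Rightarrow> 'a \<Rightarrow> 'a) \<Rightarrow> ('a \<Rightarrow> 'a \<Rightarrow> 'a) \<Rightarrow> ('a \<Rightarrow> 'a) \<Rightarrow> 'a \<Rightarrow> 'a \<Rightarrow> 'a" where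
  "aniff ot cc st x y = st (aiff ot cc st x y)"

definition aniff3 :: "('a \<Rightarrow> 'a \<Rightarrow> 'a) \<Rightarrow> ('a \<Rightarrow> 'a \<Rightarrow> 'a) \<Rightarrow> ('a \<Rightarrow> 'a) \<Rightarrow> 'a \<Rightarrow> 'a \<Rightarrow> 'a \<Rightarrow> 'a" where
  "aniff3 ot cc st x y z =
     ot (ot (aniff ot cc st x y) (aniff ot cc st x z)) (aniff ot cc st y z)"

definition weak_N_algebra :: "('a \<Rightarrow> 'a \<Rightarrow> 'a) \<Rightarrow> ('a \<Rightarrow> 'a \<Rightarrow> 'a) \<Rightarrow> ('a \<Rightarrow> 'a) \<Rightarrow> bool" where
  "weak_N_algebra ot cc st \<longleftrightarrow>
     (\<forall>x y. ot x y = ot y x) \<and> (\<forall>x y. cc x y = cc y x) \<and> (\<forall>x. st (st x) = x) \<and>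
     (\<forall>x y z. cc (ot x y) z = cc (ot x z) y)"

definition Nw_model :: "('a \<Rightarrow> 'a \<Rightarrow> 'a) \<Rightarrow> ('a \<Rightarrow> 'a \<Rightarrow> 'a) \<Rightarrow> ('a \<Rightarrow> 'a)
    \<Rightarrow> ('a ext \<Rightarrow> 'a ext \<Rightarrow> bool) \<Rightarrow> bool" where
  "Nw_model ot cc st perp \<longleftrightarrow> weak_N_algebra ot cc st \<and>
     (\<forall>x. perp (Elem x) (Elem (st x))) \<and>
     (\<forall>x y. perp (Elem x) (Elem (st y)) \<and> perp (Elem y) (Elem (st x)) \<longrightarrow> x = y) \<and>
     (\<forall>x y. perp (Elem x) (Elem y) \<longleftrightarrow> perp (Elem (cc x y)) T) \<and>
     (\<forall>x. perp (Elem x) T \<longleftrightarrow> perp (Elem (st x)) F) \<and>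
     (\<forall>x y. (perp (Elem x) F \<and> perp (Elem y) F) \<longleftrightarrow> perp (Elem (ot x y)) F) \<and>
     (\<forall>x y. perp (Elem (st (cc x (st y)))) (Elem (st (cc x y)))) \<and>
     (\<forall>x y. perp (Elem x) (Elem y) \<and> perp (Elem x) F \<longrightarrow> perp (Elem y) T) \<and>
     (\<forall>x y z. perp (Elem (aniff3 ot cc st x y z))
        (Elem (st (aimp cc st (aimp cc st x y)
                    (aimp cc st (aimp cc st y z) (aimp cc st x z))))))"

definition is_hom :: "('a \<Rightarrow> 'a \<Rightarrow> 'a) \<Rightarrow> ('a \<Rightarrow> 'a \<Rightarrow> 'a) \<Rightarrow> ('a \<Rightarrow> 'a)
    \<Rightarrow> ('v form \<Rightarrow> 'a) \<Rightarrow> bool" where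
  "is_hom ot cc st h \<longleftrightarrow>
     (\<forall>p q. h (FOtimes p q) = ot (h p) (h q)) \<and>
     (\<forall>p q. h (FCirc p q) = cc (h p) (h q)) \<and>
     (\<forall>p. h (FStar p) = st (h p))"

end

theory Submission
  imports Defs
begin

text \<open>Evaluating the formula at x := a, y := b and using (c), (d) gives
  (a \<Rightarrow> b) \<perp> (b \<Rightarrow> a)* for all a, b, so by (b) implication is commutative. Together with (f)
  and (b) this yields x \<circ> y* = (y \<circ> x)*, hence x \<circ> y \<perp> f iff x \<perp> y*; in particular x \<circ> x \<perp> f,
  and \<perp> determines the involution: x \<perp> y forces y = x*. The law (x \<otimes> y) \<circ> z = (x \<otimes> z) \<circ> y turns
  (y \<otimes> (y \<otimes> x)) \<circ> x into (y \<otimes> x) \<circ> (y \<otimes> x), whence y \<otimes> (y \<otimes> x) = x. Now (e) makes every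
  element \<perp> f, so any two elements are \<perp>-related, and (b) collapses the algebra.\<close>

text \<open>Axioms (a)--(f) of an N_w-model with the weak N-algebra laws except commutativity of \<otimes>.\<close>
locale Nw_premodel =
  fixes ot cc :: "'a \<Rightarrow> 'a \<Rightarrow> 'a" and st :: "'a \<Rightarrow> 'a" and perp :: "'a ext \<Rightarrow> 'a ext \<Rightarrow> bool"
  assumes circ_comm: "cc x y = cc y x"
    and star_star [simp]: "st (st x) = x"
    and circ_otimes_swap: "cc (ot x y) z = cc (ot x z) y"
    and perp_star: "perp (Elem x) (Elem (st x))"
    and perp_star_eq: "perp (Elem x) (Elem (st y)) \<Longrightarrow> perp (Elem y) (Elem (st x)) \<Longrightarrow> x = y"
    and perp_iff_circ_perp_T: "perp (Elem x) (Elem y) \<longleftrightarrow> perp (Elem (cc x y)) T"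
    and perp_T_iff_star_perp_F: "perp (Elem x) T \<longleftrightarrow> perp (Elem (st x)) F"
    and otimes_perp_F_iff: "perp (Elem (ot x y)) F \<longleftrightarrow> perp (Elem x) F \<and> perp (Elem y) F"
    and star_circ_star_perp: "perp (Elem (st (cc x (st y)))) (Elem (st (cc x y)))"
begin

lemma perp_sym: "perp (Elem x) (Elem y) \<Longrightarrow> perp (Elem y) (Elem x)"
  using perp_iff_circ_perp_T circ_comm by metis

lemma star_perp_T_iff: "perp (Elem (st x)) T \<longleftrightarrow> perp (Elem x) F"
  using perp_T_iff_star_perp_F[of "st x"] by simp

lemma aimp_perp_F_iff: "perp (Elem (aimp cc st p q)) F \<longleftrightarrow> perp (Elem p) (Elem (st q))"
  unfolding aimp_def using perp_T_iff_star_perp_F perp_iff_circ_perp_T by simp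

lemma aimp_comm_if_perp_F:
  assumes "\<And>a b. perp (Elem (aimp cc st (aimp cc st a b) (aimp cc st b a))) F"
  shows "aimp cc st a b = aimp cc st b a"
  using perp_star_eq assms aimp_perp_F_iff by blast

lemma perp_F_if_trivial:
  assumes "\<And>b :: 'a. b = a"
  shows "perp (Elem z) F"
proof -
  have "perp (Elem a) (Elem a)" using perp_star[of a] assms[of "st a"] by simp
  then have "perp (Elem a) T" using perp_iff_circ_perp_T assms[of "cc a a"] by simp
  then have "perp (Elem a) F" using perp_T_iff_star_perp_F assms[of "st a"] by simp
  then show ?thesis using assms[of z] by simp
qed

end

lemma Nw_model_imp_Nw_premodel: "Nw_model ot cc st perp \<Longrightarrow> Nw_premodel ot cc st perp"
  unfolding Nw_model_def weak_N_algebra_def Nw_premodel_def by (elim conjE) (intro conjI allI; blast)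

locale Nw_premodel_aimp_comm = Nw_premodel +
  assumes aimp_comm: "aimp cc st a b = aimp cc st b a"
begin

lemma circ_star_comm: "cc x (st y) = cc y (st x)"
  using aimp_comm[of x y] star_star unfolding aimp_def by metis

lemma star_perp_iff: "perp (Elem (st x)) (Elem y) \<longleftrightarrow> perp (Elem x) (Elem (st y))"
  using perp_iff_circ_perp_T circ_comm circ_star_comm by metis

lemma perp_star_star: "perp (Elem x) (Elem y) \<Longrightarrow> perp (Elem (st x)) (Elem (st y))"
  by (subst star_perp_iff) simp

lemma circ_star: "cc x (st y) = st (cc y x)"
proof (rule perp_star_eq)
  show "perp (Elem (cc x (st y))) (Elem (st (st (cc y x))))"
    using star_circ_star_perp[of x y] star_perp_iff circ_comm by simp
  show "perp (Elem (st (cc y x))) (Elem (st (cc x (st y))))"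
    using star_circ_star_perp[of x "st y"] circ_comm by simp
qed

lemma circ_perp_F_iff: "perp (Elem (cc x y)) F \<longleftrightarrow> perp (Elem x) (Elem (st y))"
  using perp_iff_circ_perp_T[of x "st y"] star_perp_T_iff circ_star circ_comm by metis

lemma circ_self_perp_F: "perp (Elem (cc x x)) F"
  using circ_perp_F_iff perp_star by blast

lemma perp_imp_eq_star: "perp (Elem x) (Elem y) \<Longrightarrow> y = st x"
  using perp_star_eq[of "st x" y] perp_star_star perp_sym by simp

lemma otimes_otimes_cancel: "ot y (ot y x) = x"
proof -
  have "perp (Elem (cc (ot y (ot y x)) x)) F"
    using circ_otimes_swap[of y "ot y x" x] circ_self_perp_F by simp
  then have "perp (Elem (ot y (ot y x))) (Elem (st x))"
    using circ_perp_F_iff by blast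
  then have "ot y (ot y x) = st (st x)"
    by (rule perp_imp_eq_star[OF perp_sym])
  then show ?thesis
    by simp
qed

lemma perp_F: "perp (Elem z) F"
  using otimes_perp_F_iff[of z "ot z (cc z z)"] otimes_otimes_cancel circ_self_perp_F by simp

lemma perp_all: "perp (Elem x) (Elem y)"
  using circ_perp_F_iff[of x "st y"] perp_F by simp

lemma trivial_carrier: "u = (v :: 'a)"
  by (rule perp_star_eq) (rule perp_all)+

end

primrec eval_form :: "('a \<Rightarrow> 'a \<Rightarrow> 'a) \<Rightarrow> ('a \<Rightarrow> 'a \<Rightarrow> 'a) \<Rightarrow> ('a \<Rightarrow> 'a) \<Rightarrow> ('v \<Rightarrow> 'a)
    \<Rightarrow> 'v form \<Rightarrow> 'a" where
  "eval_form ot cc st val (Var v) = val v"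
| "eval_form ot cc st val (FOtimes p q) = ot (eval_form ot cc st val p) (eval_form ot cc st val q)"
| "eval_form ot cc st val (FCirc p q) = cc (eval_form ot cc st val p) (eval_form ot cc st val q)"
| "eval_form ot cc st val (FStar p) = st (eval_form ot cc st val p)"

lemma is_hom_eval_form: "is_hom ot cc st (eval_form ot cc st val)"
  unfolding is_hom_def by simp

lemma eval_form_fimp:
  "eval_form ot cc st val (fimp p q) = aimp cc st (eval_form ot cc st val p) (eval_form ot cc st val q)"
  unfolding fimp_def aimp_def by simp

theorem proposition4p13:
  fixes ot cc :: "'a \<Rightarrow> 'a \<Rightarrow> 'a" and st :: "'a \<Rightarrow> 'a"
    and perp :: "'a ext \<Rightarrow> 'a ext \<Rightarrow> bool" and x y :: 'v
  assumes "Nw_model ot cc st perp"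
    and "x \<noteq> y"
  shows "(\<forall>h :: 'v form \<Rightarrow> 'a. is_hom ot cc st h \<longrightarrow>
            perp (Elem (h (fimp (fimp (Var x) (Var y)) (fimp (Var y) (Var x))))) F)
         \<longleftrightarrow> (\<exists>a :: 'a. \<forall>b. b = a)"
proof -
  interpret Nw_premodel ot cc st perp
    using assms(1) by (rule Nw_model_imp_Nw_premodel)
  show ?thesis (is "?valid \<longleftrightarrow> ?trivial")
  proof
    assume valid: ?valid
    have "perp (Elem (aimp cc st (aimp cc st a b) (aimp cc st b a))) F" for a b
      using valid[rule_format, OF is_hom_eval_form[where val = "(\<lambda>v. b)(x := a)"]] assms(2)
      unfolding eval_form_fimp by simp
    then interpret Nw_premodel_aimp_comm ot cc st perp
      by unfold_locales (rule aimp_comm_if_perp_F)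
    show ?trivial
      by (intro exI allI) (rule trivial_carrier)
  next
    assume ?trivial
    then obtain a :: 'a where "\<And>b. b = a" by blast
    then have "perp (Elem z) F" for z by (rule perp_F_if_trivial)
    then show ?valid by blast
  qed
qed

end
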